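(* Let $A$ be a commutative ring with $1\ne0$ and let $D(A)$ be the set of all divisibilities on $A$. The constructible topology on $D(A)$ is compact. In particular, the spectral topology on $D(A)$ is quasi-compact.
   Context: A divisibility on $A$ is a binary relation $|\subseteq A\times A$ such that for all $a,b,c$: (1) $a|a$; (2) $a|b,\ b|c\Rightarrow a|c$; (3) $a|b,\ a|c\Rightarrow a|b-c$; (4) $a|b\Rightarrow ac|bc$; (5) $0\nmid1$. The spectral topology on $D(A)$ is generated by the sets $U(a,b)=\{|\in D(A);\ a\nmid b\}$, $a,b\in A$; the constructible topology is generated by the sets $U(a,b)$ together with their complements $V(a,b)=\{|\in D(A);\ a|b\}$. *)

theory Defs
  imports "HOL-Analysis.Analysis"
begin

text \<open>A divisibility on a commutative ring A, represented as a binary relation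
  (pairs (a,b) with a | b).\<close>
definition is_divisibility :: "('a::comm_ring_1 \<times> 'a) set \<Rightarrow> bool" where
  "is_divisibility R \<longleftrightarrow>
     (\<forall>a. (a, a) \<in> R) \<and>
     (\<forall>a b c. (a, b) \<in> R \<longrightarrow> (b, c) \<in> R \<longrightarrow> (a, c) \<in> R) \<and>
     (\<forall>a b c. (a, b) \<in> R \<longrightarrow> (a, c) \<in> R \<longrightarrow> (a, b - c) \<in> R) \<and>
     (\<forall>a b c. (a, b) \<in> R \<longrightarrow> (a * c, b * c) \<in> R) \<and>
     (0, 1) \<notin> R"

definition divisibilities :: "('a::comm_ring_1 \<times> 'a) set set" where
  "divisibilities = {R. is_divisibility R}"

definition Uset :: "'a::comm_ring_1 \<Rightarrow> 'a \<Rightarrow> ('a \<times> 'a) set set" where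
  "Uset a b = {R \<in> divisibilities. (a, b) \<notin> R}"

definition Vset :: "'a::comm_ring_1 \<Rightarrow> 'a \<Rightarrow> ('a \<times> 'a) set set" where
  "Vset a b = {R \<in> divisibilities. (a, b) \<in> R}"

definition spectral_top :: "('a::comm_ring_1 \<times> 'a) set topology" where
  "spectral_top = topology_generated_by {Uset a b | a b. True}"

definition constructible_top :: "('a::comm_ring_1 \<times> 'a) set topology" where
  "constructible_top = topology_generated_by ({Uset a b | a b. True} \<union> {Vset a b | a b. True})"

end

theory Submission
  imports Defs
begin

text \<open>A relation on A is a point of the compact Cantor cube \<open>{0,1}\<^bsup>A\<times>A\<^esup>\<close>. Each axiom of a
  divisibility constrains only finitely many coordinates at a time, so D(A) is an intersection of
  clopen sets, hence closed and compact. The sets U(a,b) and V(a,b) are the traces of clopen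
  coordinate conditions, so D(A) with the constructible topology is a continuous image of this
  compact subspace; it is Hausdorff because U(a,b) and V(a,b) are complementary. The spectral
  topology is coarser, hence quasi-compact.\<close>

lemma compact_space_topology_generated_by_subset:
  assumes "S \<subseteq> T" and "\<Union>T \<subseteq> \<Union>S" and "compact_space (topology_generated_by T)"
  shows "compact_space (topology_generated_by S)"
proof -
  have "continuous_map (topology_generated_by T) (topology_generated_by S) id"
  proof (rule continuous_on_generated_topo)
    fix U assume "U \<in> S"
    with assms(1) have "U \<in> T" by blast
    then show "openin (topology_generated_by T) (id -` U \<inter> topspace (topology_generated_by T))"
      by (simp add: openin_Int topology_generated_by_Basis del: topology_generated_by_topspace)
  qed (use assms(2) in simp)
  from image_compactin[OF assms(3)[unfolded compact_space_def] this]
  have "compactin (topology_generated_by S) (\<Union>T)"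
    by simp
  moreover have "\<Union>T = \<Union>S"
    using assms(1,2) by blast
  ultimately show ?thesis
    by (simp add: compact_space_def)
qed

lemma Hausdorff_space_topology_generated_by:
  assumes "\<And>x y. x \<in> \<Union>S \<Longrightarrow> y \<in> \<Union>S \<Longrightarrow> x \<noteq> y \<Longrightarrow>
    \<exists>U V. U \<in> S \<and> V \<in> S \<and> x \<in> U \<and> y \<in> V \<and> disjnt U V"
  shows "Hausdorff_space (topology_generated_by S)"
  unfolding Hausdorff_space_def topology_generated_by_topspace
  using assms topology_generated_by_Basis by meson

abbreviation bool_cube :: "('a \<Rightarrow> bool) topology" where
  "bool_cube \<equiv> product_topology (\<lambda>_. discrete_topology UNIV) UNIV"

lemma topspace_bool_cube [simp]: "topspace bool_cube = UNIV"
  by (simp add: PiE_def extensional_def)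

lemma compact_space_bool_cube: "compact_space bool_cube"
  by (simp add: compact_space_product_topology compact_space_discrete_topology)

lemma continuous_map_bool_cube_condition:
  "continuous_map bool_cube (discrete_topology UNIV) (\<lambda>p. Q (p x) (p y) (p z))"
proof -
  have "continuous_map bool_cube (prod_topology (discrete_topology UNIV)
          (prod_topology (discrete_topology UNIV) (discrete_topology UNIV))) (\<lambda>p. (p x, p y, p z))"
    by (intro continuous_map_pairedI continuous_map_product_projection) auto
  then have "continuous_map bool_cube (discrete_topology UNIV) (\<lambda>p. (p x, p y, p z))"
    by (simp flip: prod_topology_discrete_topology)
  then show ?thesis
    using continuous_map_compose[of _ _ _ _ "\<lambda>(u, v, w). Q u v w"] by (fastforce simp: o_def)
qed

lemma
  shows openin_bool_cube_condition: "openin bool_cube {p. Q (p x) (p y) (p z)}"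
    and closedin_bool_cube_condition: "closedin bool_cube {p. Q (p x) (p y) (p z)}"
  using openin_continuous_map_preimage[OF continuous_map_bool_cube_condition, of "{True}" Q x y z]
    closedin_continuous_map_preimage[OF continuous_map_bool_cube_condition, of "{True}" Q x y z]
  by (simp_all add: vimage_def)

definition divisibility_predicates :: "('a::comm_ring_1 \<times> 'a \<Rightarrow> bool) set" where
  "divisibility_predicates = {p. is_divisibility (Collect p)}"

lemma image_Collect_divisibility_predicates:
  "Collect ` (divisibility_predicates :: ('a::comm_ring_1 \<times> 'a \<Rightarrow> bool) set) = divisibilities"
proof (rule subset_antisym)
  show "Collect ` divisibility_predicates \<subseteq> divisibilities"
    by (auto simp: divisibility_predicates_def divisibilities_def)
  show "divisibilities \<subseteq> Collect ` divisibility_predicates"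
  proof (rule subsetI)
    fix R
    assume "R \<in> divisibilities"
    then have "(\<lambda>x. x \<in> R) \<in> divisibility_predicates"
      by (simp add: divisibility_predicates_def divisibilities_def)
    then show "R \<in> Collect ` divisibility_predicates"
      by (rule rev_image_eqI) simp
  qed
qed

lemma closedin_divisibility_predicates:
  "closedin bool_cube (divisibility_predicates :: ('a::comm_ring_1 \<times> 'a \<Rightarrow> bool) set)"
proof -
  have eq: "divisibility_predicates =
      (\<Inter>a. {p. p (a, a)}) \<inter>
      (\<Inter>a. \<Inter>b. \<Inter>c. {p. p (a, b) \<longrightarrow> p (b, c) \<longrightarrow> p (a, c)}) \<inter>
      (\<Inter>a. \<Inter>b. \<Inter>c. {p. p (a, b) \<longrightarrow> p (a, c) \<longrightarrow> p (a, b - c)}) \<inter>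
      (\<Inter>a. \<Inter>b. \<Inter>c. {p. p (a, b) \<longrightarrow> p (a * c, b * c)}) \<inter>
      {p. \<not> p (0::'a, 1)}"
    unfolding divisibility_predicates_def is_divisibility_def by auto
  show ?thesis
    unfolding eq by (intro closedin_Int closedin_INT closedin_bool_cube_condition; simp)
qed

abbreviation spectral_subbasis :: "('a::comm_ring_1 \<times> 'a) set set set" where
  "spectral_subbasis \<equiv> {Uset a b | a b. True}"

abbreviation constructible_subbasis :: "('a::comm_ring_1 \<times> 'a) set set set" where
  "constructible_subbasis \<equiv> spectral_subbasis \<union> {Vset a b | a b. True}"

lemma Uset_0_1: "Uset 0 1 = divisibilities"
  by (auto simp: Uset_def divisibilities_def is_divisibility_def)

lemma Union_spectral_subbasis: "\<Union>spectral_subbasis = divisibilities"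
proof (rule subset_antisym)
  show "\<Union>spectral_subbasis \<subseteq> divisibilities"
    by (auto simp: Uset_def)
  have "Uset 0 1 \<in> spectral_subbasis"
    by blast
  then show "divisibilities \<subseteq> \<Union>spectral_subbasis"
    unfolding Uset_0_1 by (rule Union_upper)
qed

lemma Union_constructible_subbasis: "\<Union>constructible_subbasis = divisibilities"
proof (rule subset_antisym)
  show "\<Union>constructible_subbasis \<subseteq> divisibilities"
    by (auto simp: Uset_def Vset_def)
  have "\<Union>spectral_subbasis \<subseteq> \<Union>constructible_subbasis"
    by (rule Union_mono) (rule Un_upper1)
  then show "divisibilities \<subseteq> \<Union>constructible_subbasis"
    by (simp only: Union_spectral_subbasis)
qed

lemma topspace_spectral_top: "topspace spectral_top = divisibilities"
  unfolding spectral_top_def topology_generated_by_topspace by (rule Union_spectral_subbasis)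

lemma topspace_constructible_top: "topspace constructible_top = divisibilities"
  unfolding constructible_top_def topology_generated_by_topspace by (rule Union_constructible_subbasis)

lemma continuous_map_Collect_constructible_top:
  "continuous_map (subtopology bool_cube divisibility_predicates) constructible_top Collect"
  unfolding constructible_top_def
proof (rule continuous_on_generated_topo)
  fix W :: "('a \<times> 'a) set set"
  assume "W \<in> constructible_subbasis"
  then obtain a b where "W = Uset a b \<or> W = Vset a b" by blast
  then have "Collect -` W \<inter> divisibility_predicates
      = divisibility_predicates \<inter> {p. (W = Vset a b) = p (a, b)}"
    by (auto simp: Uset_def Vset_def divisibility_predicates_def divisibilities_def)
  then show "openin (subtopology bool_cube divisibility_predicates)
      (Collect -` W \<inter> topspace (subtopology bool_cube divisibility_predicates))"
    by (simp only: topspace_subtopology topspace_bool_cube Int_UNIV_left)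
      (intro openin_subtopology_Int2 openin_bool_cube_condition)
qed (simp only: Union_constructible_subbasis topspace_subtopology topspace_bool_cube Int_UNIV_left
    image_Collect_divisibility_predicates subset_refl)

lemma compact_space_constructible_top: "compact_space constructible_top"
proof -
  have "compactin (subtopology bool_cube divisibility_predicates) divisibility_predicates"
    by (simp add: compactin_subtopology closedin_compact_space
        compact_space_bool_cube closedin_divisibility_predicates)
  from image_compactin[OF this continuous_map_Collect_constructible_top]
  show ?thesis
    by (simp add: compact_space_def topspace_constructible_top image_Collect_divisibility_predicates)
qed

lemma Hausdorff_space_constructible_top: "Hausdorff_space constructible_top"
  unfolding constructible_top_def
proof (rule Hausdorff_space_topology_generated_by)
  fix R S :: "('a \<times> 'a) set"
  assume "R \<in> \<Union>constructible_subbasis" "S \<in> \<Union>constructible_subbasis" "R \<noteq> S"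
  then have R: "R \<in> divisibilities" and S: "S \<in> divisibilities"
    unfolding Union_constructible_subbasis by simp_all
  from \<open>R \<noteq> S\<close> obtain x where "x \<in> R \<longleftrightarrow> x \<notin> S"
    by blast
  then obtain a b where ab: "(a, b) \<in> R \<longleftrightarrow> (a, b) \<notin> S"
    by (cases x) simp
  have UV: "Uset a b \<in> constructible_subbasis" "Vset a b \<in> constructible_subbasis"
    by blast+
  show "\<exists>U V. U \<in> constructible_subbasis \<and> V \<in> constructible_subbasis
      \<and> R \<in> U \<and> S \<in> V \<and> disjnt U V"
  proof (cases "(a, b) \<in> R")
    case True
    with ab R S
    have "R \<in> Vset a b" "S \<in> Uset a b" "disjnt (Vset a b) (Uset a b)"
      by (auto simp: Uset_def Vset_def disjnt_def)
    then show ?thesis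
      by (intro exI[of _ "Vset a b"] exI[of _ "Uset a b"] conjI UV)
  next
    case False
    with ab R S
    have "R \<in> Uset a b" "S \<in> Vset a b" "disjnt (Uset a b) (Vset a b)"
      by (auto simp: Uset_def Vset_def disjnt_def)
    then show ?thesis
      by (intro exI[of _ "Uset a b"] exI[of _ "Vset a b"] conjI UV)
  qed
qed

lemma compact_space_spectral_top: "compact_space spectral_top"
  unfolding spectral_top_def
proof (rule compact_space_topology_generated_by_subset)
  show "spectral_subbasis \<subseteq> constructible_subbasis"
    by (rule Un_upper1)
  show "\<Union>constructible_subbasis \<subseteq> \<Union>spectral_subbasis"
    unfolding Union_spectral_subbasis Union_constructible_subbasis ..
  show "compact_space (topology_generated_by constructible_subbasis)"
    using compact_space_constructible_top unfolding constructible_top_def .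
qed

theorem lemma3p3:
  assumes "(1::'a::comm_ring_1) \<noteq> 0"
  shows "topspace (constructible_top :: ('a \<times> 'a) set topology) = divisibilities
       \<and> compact_space (constructible_top :: ('a \<times> 'a) set topology)
       \<and> Hausdorff_space (constructible_top :: ('a \<times> 'a) set topology)
       \<and> topspace (spectral_top :: ('a \<times> 'a) set topology) = divisibilities
       \<and> compact_space (spectral_top :: ('a \<times> 'a) set topology)"
  using topspace_constructible_top compact_space_constructible_top
    Hausdorff_space_constructible_top topspace_spectral_top compact_space_spectral_top
  by blast

end
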